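(* Unpruned multiplication is an associative binary operation on $UT^1(\Sigma)$, and the isomorphism type of the trivial tree is an identity element for it. The set $UT(\Sigma)$ of isomorphism types of non-trivial trees is a subsemigroup of $UT^1(\Sigma)$. The maps $X\mapsto X^{(+)}$ and $X\mapsto X^{( * )}$ are idempotent unary operations on $UT^1(\Sigma)$, and the subsemigroup generated by their images is commutative.
   Context: Let $\Sigma$ be a set. A $\Sigma$-tree is a finite directed graph whose underlying undirected graph is a tree, edges labelled by elements of $\Sigma$, with distinguished start and end vertices such that there is a (possibly empty) directed path from the start vertex to the end vertex; it is trivial if it has only one vertex. Isomorphism of $\Sigma$-trees means a label-preserving graph isomorphism preserving start and end vertices. $UT^1(\Sigma)$ is the set of isomorphism types of $\Sigma$-trees. Unpruned multiplication: $X\times Y$ is obtained from disjoint representatives of $X$ and $Y$ by identifying the end vertex of $X$ with the start vertex of $Y$, with start vertex that of $X$ and end vertex that of $Y$. $X^{(+)}$ is the tree with the same graph and start vertex as $X$ but with end vertex equal to the start vertex; $X^{( * )}$ has the same graph and end vertex as $X$ but start vertex equal to the end vertex. *)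

theory Defs
  imports Main
begin

text \<open>A Sigma-tree, with labels of type 's (the alphabet Sigma is the type 's).
  Vertices are natural numbers (every finite tree has such a representative).
  An edge is a triple (source, label, target).\<close>

record 's stree =
  verts :: "nat set"
  edges :: "(nat \<times> 's \<times> nat) set"
  st :: nat
  en :: nat

definition joins :: "(nat \<times> 's \<times> nat) \<Rightarrow> nat \<Rightarrow> nat \<Rightarrow> bool" where
  "joins e u v \<longleftrightarrow> (fst e = u \<and> snd (snd e) = v) \<or> (fst e = v \<and> snd (snd e) = u)"

definition uadj :: "(nat \<times> 's \<times> nat) set \<Rightarrow> (nat \<times> nat) set" where
  "uadj E = {(u, v). \<exists>a. (u, a, v) \<in> E \<or> (v, a, u) \<in> E}"

definition dadj :: "(nat \<times> 's \<times> nat) set \<Rightarrow> (nat \<times> nat) set" where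
  "dadj E = {(u, v). \<exists>a. (u, a, v) \<in> E}"

text \<open>An (undirected) cycle in the underlying multigraph: k \<ge> 1 distinct edges
  and k distinct vertices v_0..v_{k-1}, edge i joining v_i and v_{(i+1) mod k}
  (this includes loops, k = 1, and pairs of parallel edges, k = 2).\<close>
definition has_ucycle :: "(nat \<times> 's \<times> nat) set \<Rightarrow> bool" where
  "has_ucycle E \<longleftrightarrow> (\<exists>vs es. length vs = length es \<and> length es \<ge> 1 \<and>
      distinct vs \<and> distinct es \<and> set es \<subseteq> E \<and>
      (\<forall>i < length es. joins (es ! i) (vs ! i) (vs ! ((i + 1) mod length es))))"

definition is_utree :: "nat set \<Rightarrow> (nat \<times> 's \<times> nat) set \<Rightarrow> bool" where
  "is_utree V E \<longleftrightarrow> finite V \<and> finite E \<and> V \<noteq> {} \<and>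
     (\<forall>(u, a, v) \<in> E. u \<in> V \<and> v \<in> V) \<and>
     (\<forall>u \<in> V. \<forall>v \<in> V. (u, v) \<in> (uadj E)\<^sup>*) \<and>
     \<not> has_ucycle E"

definition is_tree :: "'s stree \<Rightarrow> bool" where
  "is_tree X \<longleftrightarrow> is_utree (verts X) (edges X) \<and> st X \<in> verts X \<and> en X \<in> verts X \<and>
     (st X, en X) \<in> (dadj (edges X))\<^sup>*"

definition trivial_tree :: "'s stree \<Rightarrow> bool" where
  "trivial_tree X \<longleftrightarrow> card (verts X) = 1"

definition tree_iso :: "'s stree \<Rightarrow> 's stree \<Rightarrow> bool" where
  "tree_iso X Y \<longleftrightarrow> (\<exists>f. bij_betw f (verts X) (verts Y) \<and>
     edges Y = (\<lambda>(u, a, v). (f u, a, f v)) ` edges X \<and>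
     f (st X) = st Y \<and> f (en X) = en Y)"

definition tclass :: "'s stree \<Rightarrow> 's stree set" where
  "tclass X = {Y. is_tree Y \<and> tree_iso X Y}"

definition UT1 :: "'s stree set set" where
  "UT1 = {tclass X | X. is_tree X}"

definition UT :: "'s stree set set" where
  "UT = {tclass X | X. is_tree X \<and> \<not> trivial_tree X}"

definition triv_tree :: "'s stree" where
  "triv_tree = \<lparr>verts = {0}, edges = {}, st = 0, en = 0\<rparr>"

text \<open>Unpruned product of concrete trees: X is relabelled by v \<mapsto> 2v, Y by v \<mapsto> 2v+1
  (making them disjoint), and the start vertex of Y is identified with the end of X.\<close>
definition glueY :: "'s stree \<Rightarrow> 's stree \<Rightarrow> nat \<Rightarrow> nat" where
  "glueY X Y v = (if v = st Y then 2 * en X else 2 * v + 1)"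

definition tmult :: "'s stree \<Rightarrow> 's stree \<Rightarrow> 's stree" where
  "tmult X Y = \<lparr>verts = (\<lambda>v. 2 * v) ` verts X \<union> glueY X Y ` verts Y,
     edges = (\<lambda>(u, a, v). (2 * u, a, 2 * v)) ` edges X
             \<union> (\<lambda>(u, a, v). (glueY X Y u, a, glueY X Y v)) ` edges Y,
     st = 2 * st X, en = glueY X Y (en Y)\<rparr>"

definition tplus :: "'s stree \<Rightarrow> 's stree" where
  "tplus X = X\<lparr>en := st X\<rparr>"

definition tstar :: "'s stree \<Rightarrow> 's stree" where
  "tstar X = X\<lparr>st := en X\<rparr>"

definition cmult :: "'s stree set \<Rightarrow> 's stree set \<Rightarrow> 's stree set" where
  "cmult A B = tclass (tmult (SOME X. X \<in> A) (SOME Y. Y \<in> B))"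

definition cplus :: "'s stree set \<Rightarrow> 's stree set" where
  "cplus A = tclass (tplus (SOME X. X \<in> A))"

definition cstar :: "'s stree set \<Rightarrow> 's stree set" where
  "cstar A = tclass (tstar (SOME X. X \<in> A))"

inductive_set gen_subsemigroup :: "'s stree set set \<Rightarrow> 's stree set set"
  for S :: "'s stree set set" where
  base: "A \<in> S \<Longrightarrow> A \<in> gen_subsemigroup S"
| mult: "A \<in> gen_subsemigroup S \<Longrightarrow> B \<in> gen_subsemigroup S \<Longrightarrow>
         cmult A B \<in> gen_subsemigroup S"

end

theory Submission
  imports Defs
begin

text \<open>All algebraic laws reduce to explicit isomorphisms between concrete products. Gluing two
  trees at a single vertex creates neither a cycle nor a disconnection, so products of trees are
  trees; associativity and the unit laws are witnessed by relabellings of the vertex numbering.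
  The images of \<open>(+)\<close> and \<open>(*)\<close> consist of trees whose start and end vertex coincide, a property
  preserved by products, and for two such trees both \<open>XY\<close> and \<open>YX\<close> are the two trees wedged at
  their base points.\<close>

definition map_edges :: "(nat \<Rightarrow> nat) \<Rightarrow> (nat \<times> 's \<times> nat) set \<Rightarrow> (nat \<times> 's \<times> nat) set" where
  "map_edges f E = (\<lambda>(u, a, v). (f u, a, f v)) ` E"

definition wf_stree :: "'s stree \<Rightarrow> bool" where
  "wf_stree X \<longleftrightarrow> (\<forall>(u, a, v) \<in> edges X. u \<in> verts X \<and> v \<in> verts X) \<and>
     st X \<in> verts X \<and> en X \<in> verts X"

lemma map_edges_comp: "map_edges f (map_edges g E) = map_edges (\<lambda>x. f (g x)) E"
  unfolding map_edges_def image_image by (simp add: split_def)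

lemma map_edges_ident: "map_edges (\<lambda>x. x) E = E"
  unfolding map_edges_def by auto

lemma map_edges_cong:
  "(\<And>u a v. (u, a, v) \<in> E \<Longrightarrow> f u = g u \<and> f v = g v) \<Longrightarrow> map_edges f E = map_edges g E"
  unfolding map_edges_def by (force intro!: image_cong)

lemma map_edges_Un: "map_edges f (A \<union> B) = map_edges f A \<union> map_edges f B"
  unfolding map_edges_def by (rule image_Un)

lemma map_edges_empty [simp]: "map_edges f {} = {}"
  unfolding map_edges_def by auto

lemma map_edges_memI: "(u, a, v) \<in> E \<Longrightarrow> (f u, a, f v) \<in> map_edges f E"
  unfolding map_edges_def by force

lemma map_edges_memE:
  "e \<in> map_edges f E \<Longrightarrow> (\<And>u a v. e = (f u, a, f v) \<Longrightarrow> (u, a, v) \<in> E \<Longrightarrow> P) \<Longrightarrow> P"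
  unfolding map_edges_def by auto

lemma finite_map_edges: "finite E \<Longrightarrow> finite (map_edges f E)"
  unfolding map_edges_def by simp

lemma tmult_simps:
  "verts (tmult X Y) = (\<lambda>v. 2 * v) ` verts X \<union> glueY X Y ` verts Y"
  "edges (tmult X Y) = map_edges (\<lambda>v. 2 * v) (edges X) \<union> map_edges (glueY X Y) (edges Y)"
  "st (tmult X Y) = 2 * st X"
  "en (tmult X Y) = glueY X Y (en Y)"
  by (simp_all add: tmult_def map_edges_def)

lemma inj_glueY: "inj (glueY X Y)"
  unfolding inj_def glueY_def by presburger

lemma double_eq_glueY_imp_st: "2 * a = glueY X Y b \<Longrightarrow> b = st Y"
proof (rule ccontr)
  assume "2 * a = glueY X Y b" "b \<noteq> st Y"
  then have "2 * a = 2 * b + 1"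
    by (simp add: glueY_def)
  then show False
    by presburger
qed

lemma inj_on_Un_image:
  assumes "inj_on (\<lambda>x. h (a x)) A" "inj_on (\<lambda>x. h (b x)) B"
    and "\<And>x y. x \<in> A \<Longrightarrow> y \<in> B \<Longrightarrow> h (a x) = h (b y) \<Longrightarrow> a x = b y"
  shows "inj_on h (a ` A \<union> b ` B)"
  using assms unfolding inj_on_def by (smt (verit) UnE imageE)

subsection \<open>Isomorphism types\<close>

lemma tree_iso_iff_map_edges:
  "tree_iso X Y \<longleftrightarrow> (\<exists>f. bij_betw f (verts X) (verts Y) \<and> edges Y = map_edges f (edges X) \<and>
     f (st X) = st Y \<and> f (en X) = en Y)"
  by (simp add: tree_iso_def map_edges_def)

lemma tree_isoI:
  assumes "inj_on f (verts X)" "verts Y = f ` verts X" "edges Y = map_edges f (edges X)"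
    and "f (st X) = st Y" "f (en X) = en Y"
  shows "tree_iso X Y"
  using assms unfolding tree_iso_iff_map_edges bij_betw_def by blast

lemma tree_iso_refl: "tree_iso X X"
  by (rule tree_isoI[where f = "\<lambda>x. x"]) (simp_all add: map_edges_ident)

lemma tree_iso_trans:
  assumes "tree_iso X Y" "tree_iso Y Z"
  shows "tree_iso X Z"
proof -
  obtain f where f: "bij_betw f (verts X) (verts Y)" "edges Y = map_edges f (edges X)"
      "f (st X) = st Y" "f (en X) = en Y"
    using assms(1) unfolding tree_iso_iff_map_edges by blast
  obtain g where g: "bij_betw g (verts Y) (verts Z)" "edges Z = map_edges g (edges Y)"
      "g (st Y) = st Z" "g (en Y) = en Z"
    using assms(2) unfolding tree_iso_iff_map_edges by blast
  have "bij_betw (\<lambda>x. g (f x)) (verts X) (verts Z)"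
    using bij_betw_trans[OF f(1) g(1)] by (simp add: o_def)
  then show ?thesis
    unfolding tree_iso_iff_map_edges using f g by (auto simp: map_edges_comp)
qed

lemma tree_iso_sym:
  assumes "tree_iso X Y" "wf_stree X"
  shows "tree_iso Y X"
proof -
  obtain f where f: "bij_betw f (verts X) (verts Y)" "edges Y = map_edges f (edges X)"
      "f (st X) = st Y" "f (en X) = en Y"
    using assms(1) unfolding tree_iso_iff_map_edges by blast
  define g where "g = inv_into (verts X) f"
  have g_bij: "bij_betw g (verts Y) (verts X)"
    using f(1) g_def by (simp add: bij_betw_inv_into)
  have g_f: "g (f x) = x" if "x \<in> verts X" for x
    using f(1) that g_def by (simp add: bij_betw_inv_into_left)
  have "map_edges g (edges Y) = map_edges (\<lambda>x. g (f x)) (edges X)"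
    using f(2) by (simp add: map_edges_comp)
  also have "\<dots> = edges X"
    using assms(2) g_f unfolding wf_stree_def
    by (subst map_edges_ident[symmetric], intro map_edges_cong) fastforce
  finally show ?thesis
    unfolding tree_iso_iff_map_edges
    using g_bij g_f[of "st X"] g_f[of "en X"] f(3,4) assms(2) unfolding wf_stree_def by auto
qed

lemma wf_stree_if_is_tree: "is_tree X \<Longrightarrow> wf_stree X"
  by (auto simp: is_tree_def is_utree_def wf_stree_def)

lemma wf_stree_tmult: "wf_stree X \<Longrightarrow> wf_stree Y \<Longrightarrow> wf_stree (tmult X Y)"
  unfolding wf_stree_def tmult_simps by (auto elim!: map_edges_memE)

lemma tclass_eq_if_tree_iso: "tree_iso X Y \<Longrightarrow> wf_stree X \<Longrightarrow> tclass X = tclass Y"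
  unfolding tclass_def using tree_iso_trans tree_iso_sym by blast

lemma some_tclass:
  assumes "is_tree X"
  shows "is_tree (SOME Z. Z \<in> tclass X)" "tree_iso X (SOME Z. Z \<in> tclass X)"
proof -
  have "X \<in> tclass X"
    using assms by (simp add: tclass_def tree_iso_refl)
  then show "is_tree (SOME Z. Z \<in> tclass X)" "tree_iso X (SOME Z. Z \<in> tclass X)"
    using someI[of "\<lambda>Z. Z \<in> tclass X"] unfolding tclass_def by blast+
qed

lemma UT1E: "A \<in> UT1 \<Longrightarrow> (\<And>X. is_tree X \<Longrightarrow> A = tclass X \<Longrightarrow> P) \<Longrightarrow> P"
  unfolding UT1_def by blast

subsection \<open>Cycles and connectivity under gluing and relabelling\<close>

lemma joins_mem:
  "joins e u v \<Longrightarrow> e \<in> E \<Longrightarrow> \<forall>(p, a, q) \<in> E. p \<in> A \<and> q \<in> A \<Longrightarrow> u \<in> A \<and> v \<in> A"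
  unfolding joins_def by (cases e) auto

lemma joins_map: "joins e u v \<Longrightarrow> joins ((\<lambda>(p, a, q). (h p, a, h q)) e) (h u) (h v)"
  by (cases e) (auto simp: joins_def)

lemma ex_cyclic_transition:
  fixes P :: "nat \<Rightarrow> bool"
  assumes "P a" "\<not> P b" "a < k" "b < k"
  shows "\<exists>i<k. P i \<and> \<not> P (Suc i mod k)"
proof (rule ccontr)
  assume no_transition: "\<not> ?thesis"
  have "P ((a + d) mod k)" for d
  proof (induction d)
    case 0
    then show ?case using assms by simp
  next
    case (Suc d)
    have "(a + Suc d) mod k = Suc ((a + d) mod k) mod k"
      by (simp add: mod_Suc_eq)
    then show ?case using no_transition Suc assms(3) by auto
  qed
  from this[of "b + k - a"] show False
    using assms by simp
qed

lemma Suc_mod_inj: "i < k \<Longrightarrow> j < k \<Longrightarrow> Suc i mod k = Suc j mod k \<Longrightarrow> i = j"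
  by (auto simp: mod_Suc split: if_splits)

text \<open>A cycle using edges of both sides must cross the shared vertex \<open>c\<close> twice: once when
  passing from \<open>E1\<close> to \<open>E2\<close> and once when passing back.\<close>

lemma has_ucycle_Un_one_vertex:
  assumes cyc: "has_ucycle (E1 \<union> E2)"
    and A: "\<forall>(u, a, v) \<in> E1. u \<in> A \<and> v \<in> A" and B: "\<forall>(u, a, v) \<in> E2. u \<in> B \<and> v \<in> B"
    and AB: "A \<inter> B \<subseteq> {c}"
  shows "has_ucycle E1 \<or> has_ucycle E2"
proof (rule ccontr)
  assume acyclic: "\<not> ?thesis"
  from cyc obtain vs es where cycle: "length vs = length es" "length es \<ge> 1" "distinct vs"
      "distinct es" "set es \<subseteq> E1 \<union> E2"
      "\<forall>i<length es. joins (es ! i) (vs ! i) (vs ! ((i + 1) mod length es))"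
    unfolding has_ucycle_def by blast
  define k where "k = length es"
  have "\<not> set es \<subseteq> E1" "\<not> set es \<subseteq> E2"
    using acyclic cycle unfolding has_ucycle_def by blast+
  then obtain a b where a: "a < k" "es ! a \<notin> E1" and b: "b < k" "es ! b \<notin> E2"
    unfolding k_def by (metis in_set_conv_nth subsetI)
  have mem: "es ! i \<in> E1 \<union> E2" if "i < k" for i
    using cycle(5) that k_def nth_mem by blast
  have step: "joins (es ! i) (vs ! i) (vs ! (Suc i mod k))" if "i < k" for i
    using cycle(6) that k_def by simp
  have ends_A: "vs ! i \<in> A \<and> vs ! (Suc i mod k) \<in> A" if "i < k" "es ! i \<in> E1" for i
    using joins_mem[OF step that(2) A] that(1) .
  have ends_B: "vs ! i \<in> B \<and> vs ! (Suc i mod k) \<in> B" if "i < k" "es ! i \<in> E2" for i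
    using joins_mem[OF step that(2) B] that(1) .
  have Suc_mod_less: "Suc i mod k < k" for i
    using cycle(2) unfolding k_def by (intro mod_less_divisor) linarith
  obtain i where i: "i < k" "es ! i \<in> E1" "es ! (Suc i mod k) \<notin> E1"
    using ex_cyclic_transition[of "\<lambda>i. es ! i \<in> E1" b a k] a b mem by blast
  obtain j where j: "j < k" "es ! j \<notin> E1" "es ! (Suc j mod k) \<in> E1"
    using ex_cyclic_transition[of "\<lambda>i. es ! i \<notin> E1" a b k] a b mem by blast
  have "vs ! (Suc i mod k) = c"
    using ends_A[OF i(1,2)] ends_B[OF Suc_mod_less] mem[OF Suc_mod_less] i(3) AB by blast
  moreover have "vs ! (Suc j mod k) = c"
    using ends_B[OF j(1)] ends_A[OF Suc_mod_less j(3)] mem[OF j(1)] j(2) AB by blast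
  ultimately have "Suc i mod k = Suc j mod k"
    using cycle(1,3) Suc_mod_less k_def nth_eq_iff_index_eq by metis
  then show False
    using Suc_mod_inj i j by blast
qed

lemma has_ucycle_map_edgesD:
  fixes E :: "(nat \<times> 's \<times> nat) set"
  assumes cyc: "has_ucycle (map_edges f E)" and inj: "inj_on f V"
    and wf: "\<forall>(u, a, v) \<in> E. u \<in> V \<and> v \<in> V"
  shows "has_ucycle E"
proof -
  from cyc obtain vs es where cycle: "length vs = length es" "length es \<ge> 1" "distinct vs"
      "distinct es" "set es \<subseteq> map_edges f E"
      "\<forall>i<length es. joins (es ! i) (vs ! i) (vs ! ((i + 1) mod length es))"
    unfolding has_ucycle_def by blast
  define g where "g = inv_into V f"
  define pull :: "nat \<times> 's \<times> nat \<Rightarrow> nat \<times> 's \<times> nat" where "pull = (\<lambda>(u, a, v). (g u, a, g v))"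
  define push :: "nat \<times> 's \<times> nat \<Rightarrow> nat \<times> 's \<times> nat" where "push = (\<lambda>(u, a, v). (f u, a, f v))"
  have g_f: "g (f x) = x" if "x \<in> V" for x
    using inj that g_def by simp
  have pull_push: "pull e \<in> E \<and> push (pull e) = e" if "e \<in> map_edges f E" for e
    using that by (rule map_edges_memE) (use g_f wf in \<open>auto simp: pull_def push_def\<close>)
  have wf_image: "\<forall>(p, a, q) \<in> map_edges f E. p \<in> f ` V \<and> q \<in> f ` V"
    using wf by (auto elim!: map_edges_memE)
  have vs_V: "set vs \<subseteq> f ` V"
  proof
    fix x assume "x \<in> set vs"
    then obtain i where "i < length es" "x = vs ! i"
      using cycle(1) by (auto simp: in_set_conv_nth)
    then have "joins (es ! i) x (vs ! (Suc i mod length es))" "es ! i \<in> map_edges f E"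
      using cycle(5,6) nth_mem by auto
    then show "x \<in> f ` V"
      using joins_mem wf_image by blast
  qed
  show ?thesis
    unfolding has_ucycle_def
  proof (intro exI conjI allI impI)
    show "length (map g vs) = length (map pull es)" "1 \<le> length (map pull es)"
      using cycle by simp_all
    show "distinct (map g vs)"
      using cycle(3) vs_V g_def by (simp add: distinct_map inj_on_inv_into)
    have "inj_on pull (set es)"
      by (rule inj_on_inverseI[where g = push]) (use pull_push cycle(5) in blast)
    then show "distinct (map pull es)"
      using cycle(4) by (simp add: distinct_map)
    show "set (map pull es) \<subseteq> E"
      using pull_push cycle(5) by auto
    fix i assume i: "i < length (map pull es)"
    then have "0 < length es"
      by (metis length_map gr_implies_not0 neq0_conv)
    then have "Suc i mod length es < length vs"
      using cycle(1) by simp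
    with i show "joins (map pull es ! i) (map g vs ! i) (map g vs ! ((i + 1) mod length (map pull es)))"
      using joins_map[of "es ! i" "vs ! i" "vs ! ((i + 1) mod length es)" g] cycle(1,6)
      by (simp add: pull_def)
  qed
qed

lemma rtrancl_uadj_map_edges: "(u, v) \<in> (uadj E)\<^sup>* \<Longrightarrow> (f u, f v) \<in> (uadj (map_edges f E))\<^sup>*"
proof (induction rule: rtrancl_induct)
  case (step y z)
  then have "(f y, f z) \<in> uadj (map_edges f E)"
    unfolding uadj_def by (auto intro: map_edges_memI)
  then show ?case
    using step(3) by (rule rtrancl_into_rtrancl[rotated])
qed simp

lemma rtrancl_dadj_map_edges: "(u, v) \<in> (dadj E)\<^sup>* \<Longrightarrow> (f u, f v) \<in> (dadj (map_edges f E))\<^sup>*"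
proof (induction rule: rtrancl_induct)
  case (step y z)
  then have "(f y, f z) \<in> dadj (map_edges f E)"
    unfolding dadj_def by (auto intro: map_edges_memI)
  then show ?case
    using step(3) by (rule rtrancl_into_rtrancl[rotated])
qed simp

lemma rtrancl_uadj_mono: "E \<subseteq> F \<Longrightarrow> (uadj E)\<^sup>* \<subseteq> (uadj F)\<^sup>*"
  by (rule rtrancl_mono) (auto simp: uadj_def)

lemma rtrancl_dadj_mono: "E \<subseteq> F \<Longrightarrow> (dadj E)\<^sup>* \<subseteq> (dadj F)\<^sup>*"
  by (rule rtrancl_mono) (auto simp: dadj_def)

subsection \<open>Products of concrete trees\<close>

lemma is_tree_tmult:
  assumes X: "is_tree X" and Y: "is_tree Y"
  shows "is_tree (tmult X Y)"
proof -
  let ?d = "\<lambda>v::nat. 2 * v" and ?g = "glueY X Y" and ?c = "2 * en X"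
  let ?E1 = "map_edges ?d (edges X)" and ?E2 = "map_edges ?g (edges Y)"
  let ?T = "tmult X Y"
  from X have fin_X: "finite (verts X)" "finite (edges X)" "verts X \<noteq> {}"
    and wf_X: "\<forall>(u, a, v) \<in> edges X. u \<in> verts X \<and> v \<in> verts X"
    and conn_X: "\<forall>u \<in> verts X. \<forall>v \<in> verts X. (u, v) \<in> (uadj (edges X))\<^sup>*"
    and acyc_X: "\<not> has_ucycle (edges X)"
    and path_X: "st X \<in> verts X" "en X \<in> verts X" "(st X, en X) \<in> (dadj (edges X))\<^sup>*"
    unfolding is_tree_def is_utree_def by blast+
  from Y have fin_Y: "finite (verts Y)" "finite (edges Y)"
    and wf_Y: "\<forall>(u, a, v) \<in> edges Y. u \<in> verts Y \<and> v \<in> verts Y"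
    and conn_Y: "\<forall>u \<in> verts Y. \<forall>v \<in> verts Y. (u, v) \<in> (uadj (edges Y))\<^sup>*"
    and acyc_Y: "\<not> has_ucycle (edges Y)"
    and path_Y: "st Y \<in> verts Y" "en Y \<in> verts Y" "(st Y, en Y) \<in> (dadj (edges Y))\<^sup>*"
    unfolding is_tree_def is_utree_def by blast+
  have glue_st: "?g (st Y) = ?c"
    by (simp add: glueY_def)
  have E: "edges ?T = ?E1 \<union> ?E2" and V: "verts ?T = ?d ` verts X \<union> ?g ` verts Y"
    by (simp_all add: tmult_simps)
  have wf_E1: "\<forall>(u, a, v) \<in> ?E1. u \<in> ?d ` verts X \<and> v \<in> ?d ` verts X"
    using wf_X by (auto elim!: map_edges_memE)
  have wf_E2: "\<forall>(u, a, v) \<in> ?E2. u \<in> ?g ` verts Y \<and> v \<in> ?g ` verts Y"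
    using wf_Y by (auto elim!: map_edges_memE)
  have "?d ` verts X \<inter> ?g ` verts Y \<subseteq> {?c}"
    using double_eq_glueY_imp_st glue_st by fastforce
  moreover have "\<not> has_ucycle ?E1"
    using has_ucycle_map_edgesD[of ?d "edges X" UNIV] acyc_X by (auto simp: inj_on_def)
  moreover have "\<not> has_ucycle ?E2"
    using has_ucycle_map_edgesD[of ?g "edges Y" UNIV] acyc_Y inj_glueY by auto
  ultimately have acyc: "\<not> has_ucycle (edges ?T)"
    unfolding E using has_ucycle_Un_one_vertex[OF _ wf_E1 wf_E2] by blast
  let ?R = "(uadj (edges ?T))\<^sup>*"
  have R1: "(uadj ?E1)\<^sup>* \<subseteq> ?R" and R2: "(uadj ?E2)\<^sup>* \<subseteq> ?R"
    unfolding E by (rule rtrancl_uadj_mono; blast)+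
  have to_c: "(w, ?c) \<in> ?R \<and> (?c, w) \<in> ?R" if "w \<in> verts ?T" for w
    using that unfolding V
  proof (elim UnE imageE)
    fix x assume "x \<in> verts X" "w = 2 * x"
    then show ?thesis
      using rtrancl_uadj_map_edges[of x "en X" "edges X" ?d]
        rtrancl_uadj_map_edges[of "en X" x "edges X" ?d] conn_X path_X R1 by auto
  next
    fix y assume "y \<in> verts Y" "w = ?g y"
    then show ?thesis
      using rtrancl_uadj_map_edges[of y "st Y" "edges Y" ?g]
        rtrancl_uadj_map_edges[of "st Y" y "edges Y" ?g] conn_Y path_Y R2 glue_st by auto
  qed
  have conn: "\<forall>u \<in> verts ?T. \<forall>v \<in> verts ?T. (u, v) \<in> ?R"
    using to_c by (meson rtrancl_trans)
  have "(2 * st X, ?c) \<in> (dadj (edges ?T))\<^sup>*"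
    using rtrancl_dadj_map_edges[OF path_X(3), of ?d] rtrancl_dadj_mono[of ?E1 "edges ?T"] E by auto
  moreover have "(?c, ?g (en Y)) \<in> (dadj (edges ?T))\<^sup>*"
    using rtrancl_dadj_map_edges[OF path_Y(3), of ?g] rtrancl_dadj_mono[of ?E2 "edges ?T"] E glue_st
    by auto
  ultimately have "(st ?T, en ?T) \<in> (dadj (edges ?T))\<^sup>*"
    by (simp add: tmult_simps)
  moreover have "\<forall>(u, a, v) \<in> edges ?T. u \<in> verts ?T \<and> v \<in> verts ?T"
    using wf_E1 wf_E2 unfolding E V by blast
  ultimately show ?thesis
    unfolding is_tree_def is_utree_def
    using fin_X fin_Y acyc conn path_X path_Y
    by (auto simp: tmult_simps finite_map_edges)
qed

lemma nontrivial_tmult: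
  assumes X: "is_tree X" "\<not> trivial_tree X" and Y: "is_tree Y"
  shows "\<not> trivial_tree (tmult X Y)"
proof -
  have fin: "finite (verts X)" "verts X \<noteq> {}" "finite (verts Y)"
    using X Y by (auto simp: is_tree_def is_utree_def)
  then have "card (verts X) \<noteq> 0"
    by (simp add: card_eq_0_iff)
  then have "2 \<le> card (verts X)"
    using X(2) unfolding trivial_tree_def by linarith
  also have "card (verts X) = card ((\<lambda>v::nat. 2 * v) ` verts X)"
    by (rule card_image[symmetric]) (auto simp: inj_on_def)
  also have "\<dots> \<le> card (verts (tmult X Y))"
    using fin by (intro card_mono) (auto simp: tmult_simps)
  finally show ?thesis
    unfolding trivial_tree_def by linarith
qed

lemma tree_iso_tmult:
  assumes "tree_iso X X'" "tree_iso Y Y'" "wf_stree X" "wf_stree Y"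
  shows "tree_iso (tmult X Y) (tmult X' Y')"
proof -
  obtain f where f: "bij_betw f (verts X) (verts X')" "edges X' = map_edges f (edges X)"
      "f (st X) = st X'" "f (en X) = en X'"
    using assms(1) unfolding tree_iso_iff_map_edges by blast
  obtain g where g: "bij_betw g (verts Y) (verts Y')" "edges Y' = map_edges g (edges Y)"
      "g (st Y) = st Y'" "g (en Y) = en Y'"
    using assms(2) unfolding tree_iso_iff_map_edges by blast
  define h where "h n = (if even n then 2 * f (n div 2) else glueY X' Y' (g ((n - 1) div 2)))" for n
  have h_double: "h (2 * x) = 2 * f x" for x
    by (simp add: h_def)
  have h_glue: "h (glueY X Y y) = glueY X' Y' (g y)" for y
    using f(4) g(3) by (simp add: h_def glueY_def)
  have inj_f: "inj_on f (verts X)" and inj_g: "inj_on g (verts Y)"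
    using f(1) g(1) by (simp_all add: bij_betw_def)
  have "inj_on h (verts (tmult X Y))"
    unfolding tmult_simps
  proof (rule inj_on_Un_image)
    show "inj_on (\<lambda>x. h (2 * x)) (verts X)"
      using inj_f unfolding h_double inj_on_def by simp
    show "inj_on (\<lambda>y. h (glueY X Y y)) (verts Y)"
      using inj_g injD[OF inj_glueY[of X' Y']] unfolding h_glue inj_on_def by blast
    fix x y assume xy: "x \<in> verts X" "y \<in> verts Y" "h (2 * x) = h (glueY X Y y)"
    then have glued: "2 * f x = glueY X' Y' (g y)"
      by (simp add: h_double h_glue)
    then have "g y = st Y'"
      by (rule double_eq_glueY_imp_st)
    then have "y = st Y" and "f x = en X'"
      using g(3) inj_g xy(2) assms(4) glued unfolding wf_stree_def inj_on_def
      by (metis, simp add: glueY_def)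
    moreover have "x = en X"
      using f(4) inj_f xy(1) assms(3) \<open>f x = en X'\<close> unfolding wf_stree_def inj_on_def by metis
    ultimately show "2 * x = glueY X Y y"
      by (simp add: glueY_def)
  qed
  moreover have "verts X' = f ` verts X" "verts Y' = g ` verts Y"
    using f(1) g(1) by (simp_all add: bij_betw_def)
  ultimately show ?thesis
    by (intro tree_isoI[where f = h])
      (simp_all add: tmult_simps image_Un image_image map_edges_Un map_edges_comp
        h_double h_glue f(2,3) g(2,4))
qed

text \<open>In \<open>(XY)Z\<close> the vertices of \<open>X\<close>, \<open>Y\<close>, \<open>Z\<close> are numbered \<open>4x\<close>, \<open>4y + 2\<close>, \<open>2z + 1\<close>; in \<open>X(YZ)\<close>
  they are numbered \<open>2x\<close>, \<open>4y + 1\<close>, \<open>4z + 3\<close> (glued vertices aside).\<close>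

definition assoc_relabel :: "nat \<Rightarrow> nat" where
  "assoc_relabel n = (if odd n then 2 * n + 1 else if even (n div 2) then n div 2 else n - 1)"

lemma inj_assoc_relabel: "inj assoc_relabel"
proof (rule injI)
  fix m n assume "assoc_relabel m = assoc_relabel n"
  then show "m = n"
    unfolding assoc_relabel_def by (auto split: if_splits; presburger)
qed

lemma tree_iso_tmult_assoc: "tree_iso (tmult (tmult X Y) Z) (tmult X (tmult Y Z))"
proof -
  let ?f = assoc_relabel
  have on_X: "?f (4 * x) = 2 * x" for x
    by (simp add: assoc_relabel_def)
  have on_Y: "?f (2 * glueY X Y y) = glueY X (tmult Y Z) (2 * y)" for y
    by (cases "y = st Y") (simp_all add: assoc_relabel_def glueY_def tmult_simps)
  have on_Z: "?f (glueY (tmult X Y) Z z) = glueY X (tmult Y Z) (glueY Y Z z)" for z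
  proof (cases "z = st Z")
    case True
    then show ?thesis
      using on_Y[of "en Y"] by (simp add: glueY_def tmult_simps)
  next
    case False
    have "glueY X (tmult Y Z) (2 * z + 1) = 2 * (2 * z + 1) + 1"
      unfolding glueY_def tmult_simps by presburger
    then show ?thesis
      using False by (simp add: assoc_relabel_def glueY_def)
  qed
  show ?thesis
    by (intro tree_isoI[where f = ?f] inj_on_subset[OF inj_assoc_relabel])
      (simp_all add: tmult_simps image_Un image_image map_edges_Un map_edges_comp
        on_X on_Y on_Z Un_assoc)
qed

lemma tree_iso_tmult_commute:
  assumes "st X = en X" "st Y = en Y"
  shows "tree_iso (tmult X Y) (tmult Y X)"
proof -
  define f :: "nat \<Rightarrow> nat" where
    "f n = (if even n then glueY Y X (n div 2) else 2 * (n div 2))" for n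
  have f_double: "f (2 * x) = glueY Y X x" for x
    unfolding f_def by simp
  have f_glue: "f (glueY X Y y) = 2 * y" for y
    using assms unfolding f_def glueY_def by auto
  have "inj_on f (verts (tmult X Y))"
    unfolding tmult_simps
  proof (rule inj_on_Un_image)
    show "inj_on (\<lambda>x. f (2 * x)) (verts X)"
      unfolding f_double using inj_glueY by (metis inj_on_subset subset_UNIV)
    show "inj_on (\<lambda>y. f (glueY X Y y)) (verts Y)"
      unfolding f_glue by (simp add: inj_on_def)
    fix x y assume "f (2 * x) = f (glueY X Y y)"
    then have glued: "glueY Y X x = 2 * y"
      by (simp add: f_double f_glue)
    then have "x = st X"
      using double_eq_glueY_imp_st by metis
    then show "2 * x = glueY X Y y"
      using glued assms by (simp add: glueY_def)
  qed
  moreover have "f (st (tmult X Y)) = st (tmult Y X)" "f (en (tmult X Y)) = en (tmult Y X)"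
    using assms by (simp_all add: tmult_simps f_double f_glue glueY_def)
  ultimately show ?thesis
    by (intro tree_isoI[where f = f])
      (simp_all add: tmult_simps image_Un image_image map_edges_Un map_edges_comp
        f_double f_glue Un_commute)
qed

lemma tree_iso_tmult_triv_left: "wf_stree X \<Longrightarrow> tree_iso X (tmult triv_tree X)"
  by (intro tree_isoI[where f = "glueY triv_tree X"] inj_on_subset[OF inj_glueY])
    (auto simp: tmult_simps wf_stree_def triv_tree_def glueY_def)

lemma tree_iso_tmult_triv_right: "wf_stree X \<Longrightarrow> tree_iso X (tmult X triv_tree)"
  by (intro tree_isoI[where f = "\<lambda>v. 2 * v"])
    (auto simp: inj_on_def tmult_simps wf_stree_def triv_tree_def glueY_def)

lemma is_tree_triv_tree: "is_tree triv_tree"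
  unfolding is_tree_def is_utree_def triv_tree_def has_ucycle_def by auto

lemma is_tree_tplus: "is_tree X \<Longrightarrow> is_tree (tplus X)"
  unfolding is_tree_def tplus_def by simp

lemma is_tree_tstar: "is_tree X \<Longrightarrow> is_tree (tstar X)"
  unfolding is_tree_def tstar_def by simp

lemma tree_iso_tplus: "tree_iso X Y \<Longrightarrow> tree_iso (tplus X) (tplus Y)"
  unfolding tree_iso_def tplus_def by auto

lemma tree_iso_tstar: "tree_iso X Y \<Longrightarrow> tree_iso (tstar X) (tstar Y)"
  unfolding tree_iso_def tstar_def by auto

subsection \<open>Operations on isomorphism types\<close>

lemma cmult_tclass:
  assumes "is_tree X" "is_tree Y"
  shows "cmult (tclass X) (tclass Y) = tclass (tmult X Y)"
proof -
  have "tree_iso (tmult X Y) (tmult (SOME Z. Z \<in> tclass X) (SOME Z. Z \<in> tclass Y))"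
    using tree_iso_tmult some_tclass(2) wf_stree_if_is_tree assms by blast
  then show ?thesis
    unfolding cmult_def
    using tclass_eq_if_tree_iso wf_stree_tmult wf_stree_if_is_tree assms by metis
qed

lemma cplus_tclass: "is_tree X \<Longrightarrow> cplus (tclass X) = tclass (tplus X)"
  unfolding cplus_def
  using tclass_eq_if_tree_iso tree_iso_tplus some_tclass(2) wf_stree_if_is_tree is_tree_tplus
  by metis

lemma cstar_tclass: "is_tree X \<Longrightarrow> cstar (tclass X) = tclass (tstar X)"
  unfolding cstar_def
  using tclass_eq_if_tree_iso tree_iso_tstar some_tclass(2) wf_stree_if_is_tree is_tree_tstar
  by metis

lemma cmult_UT1: "A \<in> UT1 \<Longrightarrow> B \<in> UT1 \<Longrightarrow> cmult A B \<in> UT1"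
  by (auto elim!: UT1E simp: cmult_tclass UT1_def intro: is_tree_tmult)

lemma cmult_assoc:
  assumes "A \<in> UT1" "B \<in> UT1" "C \<in> UT1"
  shows "cmult (cmult A B) C = cmult A (cmult B C)"
proof -
  obtain X Y Z where trees: "is_tree X" "is_tree Y" "is_tree Z"
    and classes: "A = tclass X" "B = tclass Y" "C = tclass Z"
    using assms by (metis UT1E)
  have "cmult (cmult A B) C = tclass (tmult (tmult X Y) Z)"
    using classes trees by (simp add: cmult_tclass is_tree_tmult)
  also have "\<dots> = tclass (tmult X (tmult Y Z))"
    using tclass_eq_if_tree_iso[OF tree_iso_tmult_assoc] wf_stree_tmult wf_stree_if_is_tree trees
    by blast
  also have "\<dots> = cmult A (cmult B C)"
    using classes trees by (simp add: cmult_tclass is_tree_tmult)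
  finally show ?thesis .
qed

lemma cmult_triv_tree:
  assumes "A \<in> UT1"
  shows "cmult (tclass triv_tree) A = A" "cmult A (tclass triv_tree) = A"
proof -
  obtain X where X: "is_tree X" "A = tclass X"
    using assms by (rule UT1E)
  have wf: "wf_stree X"
    using X(1) by (rule wf_stree_if_is_tree)
  show "cmult (tclass triv_tree) A = A"
    unfolding X(2) cmult_tclass[OF is_tree_triv_tree X(1)]
    using tclass_eq_if_tree_iso[OF tree_iso_tmult_triv_left[OF wf] wf] by (rule sym)
  show "cmult A (tclass triv_tree) = A"
    unfolding X(2) cmult_tclass[OF X(1) is_tree_triv_tree]
    using tclass_eq_if_tree_iso[OF tree_iso_tmult_triv_right[OF wf] wf] by (rule sym)
qed

lemma cmult_UT:
  assumes "A \<in> UT" "B \<in> UT"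
  shows "cmult A B \<in> UT"
proof -
  obtain X Y where "is_tree X" "\<not> trivial_tree X" "A = tclass X" "is_tree Y" "B = tclass Y"
    using assms unfolding UT_def by blast
  then show ?thesis
    using cmult_tclass is_tree_tmult nontrivial_tmult unfolding UT_def by blast
qed

lemma cplus_UT1:
  assumes "A \<in> UT1"
  shows "cplus A \<in> UT1 \<and> cplus (cplus A) = cplus A"
proof -
  obtain X where X: "is_tree X" "A = tclass X"
    using assms by (rule UT1E)
  moreover have "tplus (tplus X) = tplus X"
    by (simp add: tplus_def)
  ultimately show ?thesis
    using cplus_tclass[OF X(1)] cplus_tclass[OF is_tree_tplus[OF X(1)]] is_tree_tplus[OF X(1)]
    unfolding UT1_def by auto
qed

lemma cstar_UT1:
  assumes "A \<in> UT1"
  shows "cstar A \<in> UT1 \<and> cstar (cstar A) = cstar A"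
proof -
  obtain X where X: "is_tree X" "A = tclass X"
    using assms by (rule UT1E)
  moreover have "tstar (tstar X) = tstar X"
    by (simp add: tstar_def)
  ultimately show ?thesis
    using cstar_tclass[OF X(1)] cstar_tclass[OF is_tree_tstar[OF X(1)]] is_tree_tstar[OF X(1)]
    unfolding UT1_def by auto
qed

lemma gen_subsemigroup_loops:
  assumes "A \<in> gen_subsemigroup (cplus ` UT1 \<union> cstar ` UT1)"
  shows "\<exists>X. is_tree X \<and> st X = en X \<and> A = tclass X"
  using assms
proof (induction rule: gen_subsemigroup.induct)
  case (base A)
  then obtain X where X: "is_tree X" and "A = cplus (tclass X) \<or> A = cstar (tclass X)"
    by (auto elim!: UT1E)
  then have "A = tclass (tplus X) \<or> A = tclass (tstar X)"
    by (auto simp: cplus_tclass cstar_tclass)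
  moreover have "st (tplus X) = en (tplus X)" "st (tstar X) = en (tstar X)"
    by (simp_all add: tplus_def tstar_def)
  ultimately show ?case
    using X is_tree_tplus is_tree_tstar by blast
next
  case (mult A B)
  then obtain X Y where "is_tree X" "st X = en X" "A = tclass X"
      "is_tree Y" "st Y = en Y" "B = tclass Y"
    by blast
  moreover have "st (tmult X Y) = en (tmult X Y)"
    using \<open>st X = en X\<close> \<open>st Y = en Y\<close> by (simp add: tmult_simps glueY_def)
  ultimately show ?case
    using cmult_tclass is_tree_tmult by metis
qed

lemma cmult_commute_gen_subsemigroup:
  assumes "A \<in> gen_subsemigroup (cplus ` UT1 \<union> cstar ` UT1)"
    and "B \<in> gen_subsemigroup (cplus ` UT1 \<union> cstar ` UT1)"
  shows "cmult A B = cmult B A"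
proof -
  obtain X Y where trees: "is_tree X" "is_tree Y" and loops: "st X = en X" "st Y = en Y"
    and classes: "A = tclass X" "B = tclass Y"
    using gen_subsemigroup_loops assms by metis
  have "wf_stree (tmult X Y)"
    using wf_stree_tmult wf_stree_if_is_tree trees by blast
  then show ?thesis
    using tclass_eq_if_tree_iso[OF tree_iso_tmult_commute[OF loops]] trees classes
    by (simp add: cmult_tclass)
qed

theorem proposition4p2:
  shows
    "(\<forall>X Y :: 's stree. is_tree X \<longrightarrow> is_tree Y \<longrightarrow>
        cmult (tclass X) (tclass Y) = tclass (tmult X Y)) \<and>
     (\<forall>X :: 's stree. is_tree X \<longrightarrow> cplus (tclass X) = tclass (tplus X)) \<and>
     (\<forall>X :: 's stree. is_tree X \<longrightarrow> cstar (tclass X) = tclass (tstar X)) \<and>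
     (\<forall>A \<in> (UT1 :: 's stree set set). \<forall>B \<in> UT1. cmult A B \<in> UT1) \<and>
     (\<forall>A \<in> (UT1 :: 's stree set set). \<forall>B \<in> UT1. \<forall>C \<in> UT1.
        cmult (cmult A B) C = cmult A (cmult B C)) \<and>
     tclass (triv_tree :: 's stree) \<in> UT1 \<and>
     (\<forall>A \<in> (UT1 :: 's stree set set).
        cmult (tclass triv_tree) A = A \<and> cmult A (tclass triv_tree) = A) \<and>
     (UT :: 's stree set set) \<subseteq> UT1 \<and>
     (\<forall>A \<in> (UT :: 's stree set set). \<forall>B \<in> UT. cmult A B \<in> UT) \<and>
     (\<forall>A \<in> (UT1 :: 's stree set set). cplus A \<in> UT1 \<and> cplus (cplus A) = cplus A) \<and>
     (\<forall>A \<in> (UT1 :: 's stree set set). cstar A \<in> UT1 \<and> cstar (cstar A) = cstar A) \<and>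
     (\<forall>A \<in> gen_subsemigroup (cplus ` (UT1 :: 's stree set set) \<union> cstar ` UT1).
        \<forall>B \<in> gen_subsemigroup (cplus ` (UT1 :: 's stree set set) \<union> cstar ` UT1).
          cmult A B = cmult B A)"
proof (intro conjI ballI allI impI)
  show "tclass (triv_tree :: 's stree) \<in> UT1"
    using is_tree_triv_tree unfolding UT1_def by blast
  show "(UT :: 's stree set set) \<subseteq> UT1"
    unfolding UT1_def UT_def by blast
qed (simp_all add: cmult_tclass cplus_tclass cstar_tclass cmult_UT1 cmult_assoc cmult_triv_tree
  cmult_UT cplus_UT1 cstar_UT1 cmult_commute_gen_subsemigroup)

end
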